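(* Let $k\ge1$, $n\ge 2k$ and $0\le i\le n-2$ be integers. For $j\in\mathbb Z$ put \[ A_{i,j}=\binom{i}{\lceil i/2\rceil-j(n-k+2)}-\binom{i}{\lfloor (i+n-k)/2\rfloor+1-j(n-k+2)}, \] \[ B_{i,j}=\binom{i}{\lceil i/2\rceil-j(n-k+1)}-\binom{i}{\lfloor (i+n-k-1)/2\rfloor+1-j(n-k+1)}, \] \[ C_{i,j}=\binom{i}{\lceil i/2\rceil-j(n-k)}-\binom{i}{\lfloor (i+n-k-2)/2\rfloor+1-j(n-k)}. \] Then \[ \sum_{j\in\mathbb Z}\bigl(-A_{i,j}+2B_{i,j}-C_{i,j}\bigr) =\binom{i+1}{\lfloor\frac{i+n-k}{2}\rfloor+1}+\binom{i+1}{\lfloor\frac{i+n-k}{2}\rfloor-n+k} -2\left(\binom{i}{\lfloor\frac{i+n-k-1}{2}\rfloor+1}+\binom{i}{\lfloor\frac{i+n-k-1}{2}\rfloor-n+k}\right). \]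
   Context: Convention: $\binom{a}{b}=0$ if $b<0$ or $b>a$. *)

theory Defs
  imports "HOL-Analysis.Analysis"
begin

definition zbinom :: "nat \<Rightarrow> int \<Rightarrow> int" where
  "zbinom a b = (if b < 0 \<or> b > int a then 0 else int (a choose nat b))"

end

theory Submission
  imports Defs
begin

text \<open>
  Put m = n - k.  The hypotheses give 0 \<le> i \<le> 2m - 2, and all rounded quantities are
  halves of integers: c = \<lceil>i/2\<rceil> = (i+1) div 2, F = \<lfloor>(i+m)/2\<rfloor> = (i+m) div 2,
  G = \<lfloor>(i+m-1)/2\<rfloor> = (i+m-1) div 2.
  Each of A, B, C is a difference of binomials whose lower index is a base point b in
  the window [i/2, i/2 + m] shifted by j times a period p \<ge> m.  Because the row length i
  is smaller than 2m, such a shifted coefficient vanishes unless j \<in> {0, 1}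
  (lemma zbinom_shift_vanishes), so the series over Z is a finite sum of two terms.
  The j = 0 term collapses by Pascal's rule to binom(i+1, F+1) - 2 binom(i, G+1), and in
  the j = 1 term the ceiling contributions fall below zero, leaving, again by Pascal,
  binom(i+1, F-m) - 2 binom(i, G-m).
\<close>

lemma zbinom_eq_0: "b < 0 \<or> b > int a \<Longrightarrow> zbinom a b = 0"
  by (auto simp: zbinom_def)

text \<open>Pascal's rule, valid for every integer lower index thanks to the zero convention.\<close>
lemma zbinom_pascal: "zbinom (Suc a) b = zbinom a b + zbinom a (b - 1)"
proof -
  consider "b < 0" | "b = 0" | "b \<ge> 1 \<and> b \<le> int a + 1" | "b > int a + 1" by linarith
  then show ?thesis
  proof cases
    case 3
    then obtain t where t: "b = int t + 1" "t \<le> a"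
      by (metis add.commute add_le_cancel_left nat_int nat_le_iff zle_iff_zadd)
    have "Suc a choose Suc t = (a choose t) + (a choose Suc t)" by simp
    then show ?thesis using t
      by (auto simp: zbinom_def nat_add_distrib binomial_eq_0 simp del: binomial_Suc_Suc)
  qed (auto simp: zbinom_def)
qed

lemma zbinom_shift_vanishes:
  fixes a :: nat and b p j :: int
  assumes "p \<ge> 0" "int a < b + p" "b < 2 * p" "j \<notin> {0, 1}"
  shows "zbinom a (b - j * p) = 0"
proof (rule zbinom_eq_0)
  consider "j \<le> -1" | "j \<ge> 2" using assms(4) by force
  then show "b - j * p < 0 \<or> b - j * p > int a"
  proof cases
    case 1
    then have "j * p \<le> - p" using mult_right_mono[OF 1 assms(1)] by simp
    then show ?thesis using assms(2) by linarith
  next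
    case 2
    then have "j * p \<ge> 2 * p" using mult_right_mono[OF 2 assms(1)] by simp
    then show ?thesis using assms(3) by linarith
  qed
qed

lemma window_sum:
  fixes i :: nat and m :: int
  assumes "m \<ge> 1" "int i \<le> 2 * m - 2"
  defines "c \<equiv> (int i + 1) div 2" and "F \<equiv> (int i + m) div 2" and "G \<equiv> (int i + m - 1) div 2"
  defines "T \<equiv> \<lambda>j::int.
      - (zbinom i (c - j * (m + 2)) - zbinom i (F + 1 - j * (m + 2)))
      + 2 * (zbinom i (c - j * (m + 1)) - zbinom i (G + 1 - j * (m + 1)))
      - (zbinom i (c - j * m) - zbinom i (F - j * m))"
  shows "((\<lambda>j. real_of_int (T j)) has_sum
           real_of_int (zbinom (i + 1) (F + 1) + zbinom (i + 1) (F - m)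
                        - 2 * (zbinom i (G + 1) + zbinom i (G - m)))) UNIV"
proof -
  have c: "int i \<le> 2 * c" "2 * c \<le> int i + 1" unfolding c_def by presburger+
  have F: "2 * F \<le> int i + m" "int i + m \<le> 2 * F + 1" unfolding F_def by presburger+
  have G: "2 * G \<le> int i + m - 1" "int i + m - 1 \<le> 2 * G + 1" unfolding G_def by presburger+
  have outside: "T j = 0" if "j \<notin> {0, 1}" for j
    unfolding T_def using assms(1,2) c F G that
    by (simp add: zbinom_shift_vanishes)
  have "T 0 = zbinom (i + 1) (F + 1) - 2 * zbinom i (G + 1)"
    unfolding T_def by (simp add: zbinom_pascal[simplified])
  moreover have "T 1 = zbinom (i + 1) (F - m) - 2 * zbinom i (G - m)"
  proof -
    have "c - p < 0" if "p \<ge> m" for p using c assms(2) that by linarith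
    then have "zbinom i (c - p) = 0" if "p \<ge> m" for p using that by (simp add: zbinom_eq_0)
    then show ?thesis
      unfolding T_def by (simp add: zbinom_pascal[simplified] algebra_simps)
  qed
  ultimately show ?thesis
    by (intro has_sum_finite_neutralI[where B = "{0, 1}"]) (use outside in auto)
qed

lemma floor_half_of_int: "\<lfloor>real_of_int x / 2\<rfloor> = x div 2"
  using floor_divide_of_int_eq[of x 2] by simp

lemma ceiling_half_of_nat: "\<lceil>real a / 2\<rceil> = (int a + 1) div 2"
proof -
  have "\<lceil>real a / 2\<rceil> = - ((- int a) div 2)"
    using floor_half_of_int[of "- int a"] by (simp add: ceiling_def)
  also have "\<dots> = (int a + 1) div 2" by presburger
  finally show ?thesis .
qed

theorem mainTheorem10:
  fixes k n i :: nat
  assumes "k \<ge> 1" and "n \<ge> 2 * k" and "i \<le> n - 2"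
  defines "A \<equiv> \<lambda>j::int. zbinom i (\<lceil>real i / 2\<rceil> - j * (int n - int k + 2))
              - zbinom i (\<lfloor>(real i + real n - real k) / 2\<rfloor> + 1 - j * (int n - int k + 2))"
      and "B \<equiv> \<lambda>j::int. zbinom i (\<lceil>real i / 2\<rceil> - j * (int n - int k + 1))
              - zbinom i (\<lfloor>(real i + real n - real k - 1) / 2\<rfloor> + 1 - j * (int n - int k + 1))"
      and "C \<equiv> \<lambda>j::int. zbinom i (\<lceil>real i / 2\<rceil> - j * (int n - int k))
              - zbinom i (\<lfloor>(real i + real n - real k - 2) / 2\<rfloor> + 1 - j * (int n - int k))"
  shows "((\<lambda>j::int. real_of_int (- A j + 2 * B j - C j)) has_sum
           real_of_int (zbinom (i + 1) (\<lfloor>(real i + real n - real k) / 2\<rfloor> + 1)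
             + zbinom (i + 1) (\<lfloor>(real i + real n - real k) / 2\<rfloor> - int n + int k)
             - 2 * (zbinom i (\<lfloor>(real i + real n - real k - 1) / 2\<rfloor> + 1)
                    + zbinom i (\<lfloor>(real i + real n - real k - 1) / 2\<rfloor> - int n + int k)))) UNIV"
proof -
  define m where "m = int n - int k"
  have m: "m \<ge> 1" "int i \<le> 2 * m - 2" using assms(1-3) unfolding m_def by auto
  have periods: "int n - int k + 2 = m + 2" "int n - int k + 1 = m + 1" "int n - int k = m"
    "\<And>x. x - int n + int k = x - m" unfolding m_def by simp_all
  have floors: "\<lfloor>(real i + real n - real k - d) / 2\<rfloor> = (int i + m - d) div 2" for d :: int
    using floor_half_of_int[of "int i + m - d"] by (simp add: m_def add_diff_eq)
  have "\<lfloor>(real i + real n - real k - 2) / 2\<rfloor> = (int i + m) div 2 - 1"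
    using floors[of 2] by simp
  moreover have "\<lfloor>(real i + real n - real k - 1) / 2\<rfloor> = (int i + m - 1) div 2"
    using floors[of 1] by simp
  moreover have "\<lfloor>(real i + real n - real k) / 2\<rfloor> = (int i + m) div 2"
    using floors[of 0] by simp
  ultimately show ?thesis
    using window_sum[OF m] unfolding A_def B_def C_def periods ceiling_half_of_nat by simp
qed

end
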